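(* Let $d>r\ge1$, $w=(w_1,\dots,w_r)$ a generalized partition of length $r$, and $u$ a partition with $u_1\le d-r$ and length at most $r$, such that $\mathcal D(\chi(u))\subset\mathcal D(w)$ (so $w/\chi(u)$ is a skew partition) and $(w,\tilde u)$ is admissible. Let $\Sigma=\mathcal D(w/\chi(u))$ and $$\Sigma_\pm=\{(i,j)\in\Sigma:\ \tilde u_{1-j}-(r+1-j)\gtrless w_i-i\},$$ with the convention $\tilde u_k=+\infty$ for $k\le0$ (so $\Sigma=\Sigma_+\cup\Sigma_-$). Define $s_+,s_-$ by $(s_+)_i=w_i+\operatorname{card}\{j\in\{1,..,d-r\}: w_i-i<\tilde u_j-(r+j)\}$ and $(s_-)_j=\tilde u_j-\operatorname{card}\{i\in\{1,..,r\}: w_i-i<\tilde u_j-(r+j)\}$. Then (i) $s_+=[\Sigma_+]$; (ii) $s_-=\langle\chi^*(\Sigma_-)\rangle$; (iii) $i(w,\tilde u)=|u|-\operatorname{card}(\Sigma_-)$.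
   Context: A generalized partition of length $r$ is a weakly decreasing sequence of $r$ integers, with diagram $\mathcal D(u)=\{(i,j)\in\{1,..,r\}\times\mathbb Z: j\le u_i\}$; $\mathcal D(w/u)=\mathcal D(w)\setminus\mathcal D(u)$. For a partition $u=(u_1,\dots,u_r)$ (padded with zeros to length $r$), $\chi(u)=(-u_r,\dots,-u_1)$, and $\chi^*(i,j)=(r+1-i,1-j)$. $\tilde u$ is the transpose of $u$, regarded as $(\tilde u_1,\dots,\tilde u_{d-r})$. For a finite set $S$ of pairs, $[S]_i=\operatorname{card}\{j:(i,j)\in S\}$ and $\langle S\rangle_j=\operatorname{card}\{i:(i,j)\in S\}$. For $a=(w,\tilde u)\in\mathbb Z^d$ and $I(d)=(1,\dots,d)$: $a$ is admissible iff the entries of $a-I(d)$ are pairwise distinct, and $i(a)=\operatorname{card}\{(i,j):i<j,\ (a-I(d))_i<(a-I(d))_j\}$; $i(w,\tilde u)=i(a)$. $|u|=\sum u_i$. *)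

theory Defs
  imports Main "HOL-Library.Extended_Real"
begin

definition gen_partition :: "nat \<Rightarrow> (nat \<Rightarrow> int) \<Rightarrow> bool" where
  "gen_partition r w \<longleftrightarrow> (\<forall>i j. 1 \<le> i \<longrightarrow> i \<le> j \<longrightarrow> j \<le> r \<longrightarrow> w j \<le> w i)"

text \<open>Partition of length at most r, padded with zeros to length r (entries u 1..u r).\<close>
definition partition_le :: "nat \<Rightarrow> (nat \<Rightarrow> nat) \<Rightarrow> bool" where
  "partition_le r u \<longleftrightarrow> (\<forall>i j. 1 \<le> i \<longrightarrow> i \<le> j \<longrightarrow> j \<le> r \<longrightarrow> u j \<le> u i)"

definition diagram :: "nat \<Rightarrow> (nat \<Rightarrow> int) \<Rightarrow> (nat \<times> int) set" where
  "diagram r u = {(i, j). 1 \<le> i \<and> i \<le> r \<and> j \<le> u i}"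

definition skew_diagram :: "nat \<Rightarrow> (nat \<Rightarrow> int) \<Rightarrow> (nat \<Rightarrow> int) \<Rightarrow> (nat \<times> int) set" where
  "skew_diagram r w u = diagram r w - diagram r u"

definition chi :: "nat \<Rightarrow> (nat \<Rightarrow> nat) \<Rightarrow> nat \<Rightarrow> int" where
  "chi r u i = - int (u (r + 1 - i))"

definition chi_star :: "nat \<Rightarrow> nat \<times> int \<Rightarrow> nat \<times> int" where
  "chi_star r c = (r + 1 - fst c, 1 - snd c)"

definition transpose_part :: "nat \<Rightarrow> (nat \<Rightarrow> nat) \<Rightarrow> nat \<Rightarrow> nat" where
  "transpose_part r u j = card {i. 1 \<le> i \<and> i \<le> r \<and> j \<le> u i}"

definition transpose_ext :: "nat \<Rightarrow> (nat \<Rightarrow> nat) \<Rightarrow> int \<Rightarrow> ereal" where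
  "transpose_ext r u k = (if k \<le> 0 then PInfty else ereal (of_nat (transpose_part r u (nat k))))"

definition row_count :: "(nat \<times> int) set \<Rightarrow> nat \<Rightarrow> nat" where
  "row_count S i = card {j. (i, j) \<in> S}"

definition col_count :: "(nat \<times> int) set \<Rightarrow> int \<Rightarrow> nat" where
  "col_count S j = card {i. (i, j) \<in> S}"

definition concat_seq :: "nat \<Rightarrow> (nat \<Rightarrow> int) \<Rightarrow> (nat \<Rightarrow> nat) \<Rightarrow> nat \<Rightarrow> int" where
  "concat_seq r w ut k = (if k \<le> r then w k else int (ut (k - r)))"

definition admissible :: "nat \<Rightarrow> (nat \<Rightarrow> int) \<Rightarrow> bool" where
  "admissible d a \<longleftrightarrow> inj_on (\<lambda>k. a k - int k) {1..d}"

definition inv_count :: "nat \<Rightarrow> (nat \<Rightarrow> int) \<Rightarrow> nat" where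
  "inv_count d a = card {(i, j). 1 \<le> i \<and> i < j \<and> j \<le> d \<and> a i - int i < a j - int j}"

end

theory Submission
  imports Defs
begin

text \<open>For a = (w, ut) the entries of a - I(d) are w_shift i = w_i - i and
  ut_shift k = ut_k - (r + k); both blocks are strictly decreasing, and admissibility says they
  never meet. Hence the k with w_shift i < ut_shift k form an initial segment {1..row_cut i},
  and the i with ut_shift k < w_shift i form an initial segment {1..col_cut k}. A cell
  (i, 1 - k) of \<Sigma> with k \<ge> 1 lies in \<Sigma>_+ exactly when w_shift i < ut_shift k, so row i of
  \<Sigma>_+ is the interval (-row_cut i, w_i], row i of \<Sigma>_- is (-u_(r+1-i), -row_cut i], and
  column k of \<chi>*(\<Sigma>_-) is [r + 1 - col_cut k, ut_k]. The inversions of a are the pairs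
  (i, r + k) with w_shift i < ut_shift k, so i(a) = \<Sigma>_i row_cut i = |u| - card \<Sigma>_-.\<close>

lemma downward_closed_eq_atLeastAtMost:
  fixes S :: "nat set"
  assumes "finite S" "0 \<notin> S" "\<And>k k'. k \<in> S \<Longrightarrow> 1 \<le> k' \<Longrightarrow> k' \<le> k \<Longrightarrow> k' \<in> S"
  shows "S = {1..card S}"
proof (cases "S = {}")
  case False
  have "S = {1..Max S}"
    using assms Max_ge[OF assms(1)] Max_in[OF assms(1) False]
    by (auto simp: Suc_le_eq intro: gr0I)
  then show ?thesis by (metis card_atLeastAtMost diff_Suc_1)
qed simp

lemma transpose_part_le: "transpose_part r u k \<le> r"
  unfolding transpose_part_def by (rule order.trans[OF card_mono[of "{1..r}"]]) auto

lemma transpose_part_antimono: "k \<le> k' \<Longrightarrow> transpose_part r u k' \<le> transpose_part r u k"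
  unfolding transpose_part_def by (intro card_mono) auto

lemma transpose_part_set_eq:
  assumes "partition_le r u"
  shows "{i. 1 \<le> i \<and> i \<le> r \<and> k \<le> u i} = {1..transpose_part r u k}"
  unfolding transpose_part_def
  by (rule downward_closed_eq_atLeastAtMost)
    (use assms in \<open>auto simp: partition_le_def intro: order.trans\<close>)

lemma le_partition_iff_le_transpose:
  assumes "partition_le r u" "1 \<le> i" "i \<le> r"
  shows "k \<le> u i \<longleftrightarrow> i \<le> transpose_part r u k"
  using transpose_part_set_eq[OF assms(1), of k] assms(2,3) by (auto simp: set_eq_iff)

locale skew_setting =
  fixes d r :: nat and w :: "nat \<Rightarrow> int" and u :: "nat \<Rightarrow> nat"
  assumes w_partition: "gen_partition r w"
    and u_partition: "partition_le r u" and u1_le: "u 1 \<le> d - r"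
    and chi_subset: "diagram r (chi r u) \<subseteq> diagram r w"
    and admissible: "admissible d (concat_seq r w (transpose_part r u))"
begin

abbreviation ut :: "nat \<Rightarrow> nat" where "ut \<equiv> transpose_part r u"

abbreviation wu :: "nat \<Rightarrow> int" where "wu \<equiv> concat_seq r w ut"

abbreviation w_shift :: "nat \<Rightarrow> int" where "w_shift i \<equiv> w i - int i"
abbreviation ut_shift :: "nat \<Rightarrow> int" where "ut_shift k \<equiv> int (ut k) - int (r + k)"

lemma w_antimono: "1 \<le> i \<Longrightarrow> i \<le> j \<Longrightarrow> j \<le> r \<Longrightarrow> w j \<le> w i"
  using w_partition unfolding gen_partition_def by blast

lemma le_u_iff_le_ut: "1 \<le> i \<Longrightarrow> i \<le> r \<Longrightarrow> k \<le> u i \<longleftrightarrow> i \<le> ut k"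
  by (rule le_partition_iff_le_transpose[OF u_partition])

lemma le_u_rev_iff_le_ut:
  "1 \<le> i \<Longrightarrow> i \<le> r \<Longrightarrow> k \<le> u (r + 1 - i) \<longleftrightarrow> r + 1 - i \<le> ut k"
  by (rule le_u_iff_le_ut) auto

lemma u_le_d_minus_r: "1 \<le> i \<Longrightarrow> i \<le> r \<Longrightarrow> u i \<le> d - r"
  using u_partition u1_le unfolding partition_le_def by (meson le_trans order_refl)

lemma u_rev_le_d_minus_r: "1 \<le> i \<Longrightarrow> i \<le> r \<Longrightarrow> u (r + 1 - i) \<le> d - r"
  by (rule u_le_d_minus_r) auto

lemma neg_u_le_w: "1 \<le> i \<Longrightarrow> i \<le> r \<Longrightarrow> - int (u (r + 1 - i)) \<le> w i"
  using chi_subset unfolding diagram_def chi_def by auto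

lemma w_shift_neq_ut_shift:
  assumes "1 \<le> i" "i \<le> r" "1 \<le> k" "k \<le> d - r"
  shows "w_shift i \<noteq> ut_shift k"
proof
  assume "w_shift i = ut_shift k"
  then have "wu i - int i = wu (r + k) - int (r + k)"
    using assms by (simp add: concat_seq_def)
  moreover have "i \<in> {1..d}" "r + k \<in> {1..d}" using assms by auto
  ultimately have "i = r + k"
    using admissible unfolding admissible_def by (meson inj_onD)
  then show False using assms by simp
qed

definition inversion_cols :: "nat \<Rightarrow> nat set" where
  "inversion_cols i = {k \<in> {1..d - r}. w_shift i < ut_shift k}"

definition row_cut :: "nat \<Rightarrow> nat" where
  "row_cut i = card (inversion_cols i)"

lemma inversion_cols_eq: "inversion_cols i = {1..row_cut i}"
  unfolding row_cut_def
proof (rule downward_closed_eq_atLeastAtMost)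
  fix k k' assume "k \<in> inversion_cols i" "1 \<le> k'" "k' \<le> k"
  then show "k' \<in> inversion_cols i"
    using transpose_part_antimono[of k' k r u] by (auto simp: inversion_cols_def)
qed (auto simp: inversion_cols_def)

lemma w_shift_less_ut_shift_iff_le_row_cut:
  "1 \<le> k \<Longrightarrow> k \<le> d - r \<Longrightarrow> w_shift i < ut_shift k \<longleftrightarrow> k \<le> row_cut i"
  using inversion_cols_eq[of i] by (auto simp: inversion_cols_def set_eq_iff)

lemma ut_shift_less_w_shift_iff_row_cut_less:
  assumes i: "1 \<le> i" "i \<le> r" and k: "1 \<le> k" "k \<le> d - r"
  shows "ut_shift k < w_shift i \<longleftrightarrow> row_cut i < k"
  using w_shift_less_ut_shift_iff_le_row_cut[OF k, of i] w_shift_neq_ut_shift[OF i k] by linarith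

lemma row_cut_le_d_minus_r: "row_cut i \<le> d - r"
  unfolding row_cut_def inversion_cols_def by (rule order.trans[OF card_mono[of "{1..d - r}"]]) auto

lemma row_cut_le_u:
  assumes i: "1 \<le> i" "i \<le> r"
  shows "row_cut i \<le> u (r + 1 - i)"
proof (rule ccontr)
  let ?v = "u (r + 1 - i)"
  assume "\<not> row_cut i \<le> ?v"
  then have "w_shift i < ut_shift (?v + 1)"
    using w_shift_less_ut_shift_iff_le_row_cut[of "?v + 1" i] row_cut_le_d_minus_r[of i] by simp
  moreover have "ut (?v + 1) < r + 1 - i"
    using le_u_rev_iff_le_ut[OF i, of "?v + 1"] by simp
  ultimately show False using neg_u_le_w[OF i] by linarith
qed

lemma neg_row_cut_le_w:
  assumes i: "1 \<le> i" "i \<le> r"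
  shows "- int (row_cut i) \<le> w i"
proof (cases "0 \<le> w i")
  case False
  define k where "k = nat (- w i)"
  have k: "1 \<le> k" "int k = - w i" using False unfolding k_def by auto
  then have "k \<le> u (r + 1 - i)" using neg_u_le_w[OF i] by linarith
  then have "r + 1 - i \<le> ut k" using le_u_rev_iff_le_ut[OF i] by simp
  then have "w_shift i < ut_shift k" using k i by linarith
  then have "k \<le> row_cut i"
    using w_shift_less_ut_shift_iff_le_row_cut[OF k(1)] u_rev_le_d_minus_r[OF i]
      \<open>k \<le> u (r + 1 - i)\<close>
    by (meson order.trans)
  then show ?thesis using k by linarith
qed simp

definition skew :: "(nat \<times> int) set" where
  "skew = skew_diagram r w (chi r u)"

definition skew_plus :: "(nat \<times> int) set" where
  "skew_plus = {(i, j) \<in> skew. transpose_ext r u (1 - j) - ereal (of_int (int r + 1 - j))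
                                 > ereal (of_int (w i - int i))}"

definition skew_minus :: "(nat \<times> int) set" where
  "skew_minus = {(i, j) \<in> skew. transpose_ext r u (1 - j) - ereal (of_int (int r + 1 - j))
                                  < ereal (of_int (w i - int i))}"

lemma mem_skew: "(i, j) \<in> skew \<longleftrightarrow> 1 \<le> i \<and> i \<le> r \<and> - int (u (r + 1 - i)) < j \<and> j \<le> w i"
  unfolding skew_def skew_diagram_def diagram_def chi_def by auto

lemma mem_skew_plus_pos: "1 \<le> j \<Longrightarrow> (i, j) \<in> skew_plus \<longleftrightarrow> (i, j) \<in> skew"
  unfolding skew_plus_def transpose_ext_def by auto

lemma mem_skew_minus_pos: "1 \<le> j \<Longrightarrow> (i, j) \<notin> skew_minus"
  unfolding skew_minus_def transpose_ext_def by auto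

lemma mem_skew_plus_nonpos:
  assumes i: "1 \<le> i" "i \<le> r" and "1 \<le> k"
  shows "(i, 1 - int k) \<in> skew_plus \<longleftrightarrow> k \<le> row_cut i \<and> 1 - int k \<le> w i"
proof -
  have "(i, 1 - int k) \<in> skew_plus \<longleftrightarrow>
      k \<le> u (r + 1 - i) \<and> 1 - int k \<le> w i \<and> w_shift i < ut_shift k"
    using i \<open>1 \<le> k\<close> by (auto simp: skew_plus_def transpose_ext_def mem_skew)
  also have "\<dots> \<longleftrightarrow> k \<le> row_cut i \<and> 1 - int k \<le> w i"
    using w_shift_less_ut_shift_iff_le_row_cut[OF \<open>1 \<le> k\<close>] row_cut_le_u[OF i]
      u_rev_le_d_minus_r[OF i]
    by auto
  finally show ?thesis .
qed

lemma mem_skew_minus_nonpos: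
  assumes i: "1 \<le> i" "i \<le> r" and "1 \<le> k"
  shows "(i, 1 - int k) \<in> skew_minus \<longleftrightarrow> row_cut i < k \<and> k \<le> u (r + 1 - i)"
proof -
  have "(i, 1 - int k) \<in> skew_minus \<longleftrightarrow>
      k \<le> u (r + 1 - i) \<and> 1 - int k \<le> w i \<and> ut_shift k < w_shift i"
    using i \<open>1 \<le> k\<close> by (auto simp: skew_minus_def transpose_ext_def mem_skew)
  also have "\<dots> \<longleftrightarrow> k \<le> u (r + 1 - i) \<and> 1 - int k \<le> w i \<and> row_cut i < k"
    using ut_shift_less_w_shift_iff_row_cut_less[OF i \<open>1 \<le> k\<close>] u_rev_le_d_minus_r[OF i]
    by (meson order.trans)
  also have "\<dots> \<longleftrightarrow> row_cut i < k \<and> k \<le> u (r + 1 - i)"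
    using neg_row_cut_le_w[OF i] by auto
  finally show ?thesis .
qed

lemma row_skew_plus:
  assumes i: "1 \<le> i" "i \<le> r"
  shows "{j. (i, j) \<in> skew_plus} = {- int (row_cut i)<..w i}"
proof (rule set_eqI)
  fix j
  show "j \<in> {j. (i, j) \<in> skew_plus} \<longleftrightarrow> j \<in> {- int (row_cut i)<..w i}"
  proof (cases "1 \<le> j")
    case True
    then show ?thesis using i by (auto simp: mem_skew_plus_pos mem_skew)
  next
    case False
    then obtain k where "1 \<le> k" "j = 1 - int k" by (intro that[of "nat (1 - j)"]) auto
    then show ?thesis using mem_skew_plus_nonpos[OF i] by auto
  qed
qed

lemma row_skew_minus:
  assumes i: "1 \<le> i" "i \<le> r"
  shows "{j. (i, j) \<in> skew_minus} = {- int (u (r + 1 - i))<..- int (row_cut i)}"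
proof (rule set_eqI)
  fix j
  show "j \<in> {j. (i, j) \<in> skew_minus} \<longleftrightarrow> j \<in> {- int (u (r + 1 - i))<..- int (row_cut i)}"
  proof (cases "1 \<le> j")
    case True
    then show ?thesis by (auto simp: mem_skew_minus_pos)
  next
    case False
    then obtain k where "1 \<le> k" "j = 1 - int k" by (intro that[of "nat (1 - j)"]) auto
    then show ?thesis using mem_skew_minus_nonpos[OF i] by auto
  qed
qed

definition col_cut :: "nat \<Rightarrow> nat" where
  "col_cut k = card {i \<in> {1..r}. ut_shift k < w_shift i}"

lemma col_cut_set_eq: "{i \<in> {1..r}. ut_shift k < w_shift i} = {1..col_cut k}"
  unfolding col_cut_def
proof (rule downward_closed_eq_atLeastAtMost)
  fix i i' assume "i \<in> {i \<in> {1..r}. ut_shift k < w_shift i}" "1 \<le> i'" "i' \<le> i"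
  then show "i' \<in> {i \<in> {1..r}. ut_shift k < w_shift i}" using w_antimono[of i' i] by auto
qed auto

lemma ut_shift_less_w_shift_iff_le_col_cut:
  "1 \<le> i \<Longrightarrow> i \<le> r \<Longrightarrow> ut_shift k < w_shift i \<longleftrightarrow> i \<le> col_cut k"
  using col_cut_set_eq[of k] by (auto simp: set_eq_iff)

lemma col_cut_le_r: "col_cut k \<le> r"
  unfolding col_cut_def by (rule order.trans[OF card_mono[of "{1..r}"]]) auto

lemma r_minus_ut_le_col_cut: "r - ut k \<le> col_cut k"
proof (cases "ut k < r")
  case True
  let ?i = "r - ut k"
  have i: "1 \<le> ?i" "?i \<le> r" using True by auto
  have "\<not> k \<le> u (r + 1 - ?i)" using le_u_rev_iff_le_ut[OF i] True by simp
  then have "ut_shift k < w_shift ?i" using neg_u_le_w[OF i] True by linarith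
  then show ?thesis using ut_shift_less_w_shift_iff_le_col_cut[OF i] by simp
qed simp

lemma card_w_shift_less_ut_shift:
  assumes k: "1 \<le> k" "k \<le> d - r"
  shows "card {i \<in> {1..r}. w_shift i < ut_shift k} = r - col_cut k"
proof -
  have "w_shift i < ut_shift k \<longleftrightarrow> col_cut k < i" if "1 \<le> i" "i \<le> r" for i
    using ut_shift_less_w_shift_iff_le_col_cut[OF that, of k] w_shift_neq_ut_shift[OF that k]
    by linarith
  then have "{i \<in> {1..r}. w_shift i < ut_shift k} = {col_cut k + 1..r}" by auto
  then show ?thesis by simp
qed

lemma mem_chi_star_skew_minus:
  "(i, j) \<in> chi_star r ` skew_minus \<longleftrightarrow> 1 \<le> i \<and> i \<le> r \<and> (r + 1 - i, 1 - j) \<in> skew_minus"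
proof
  assume "(i, j) \<in> chi_star r ` skew_minus"
  then obtain a b where "(a, b) \<in> skew_minus" "(i, j) = chi_star r (a, b)" by auto
  moreover have "1 \<le> a" "a \<le> r"
    using \<open>(a, b) \<in> skew_minus\<close> by (auto simp: skew_minus_def mem_skew)
  ultimately show "1 \<le> i \<and> i \<le> r \<and> (r + 1 - i, 1 - j) \<in> skew_minus"
    by (auto simp: chi_star_def)
next
  assume "1 \<le> i \<and> i \<le> r \<and> (r + 1 - i, 1 - j) \<in> skew_minus"
  moreover have "chi_star r (r + 1 - i, 1 - j) = (i, j)"
    using calculation by (simp add: chi_star_def)
  ultimately show "(i, j) \<in> chi_star r ` skew_minus" by (metis image_eqI)
qed

lemma col_chi_star_skew_minus:
  assumes k: "1 \<le> k" "k \<le> d - r"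
  shows "{i. (i, int k) \<in> chi_star r ` skew_minus} = {r + 1 - col_cut k..ut k}"
proof (rule set_eqI)
  fix i
  have "(i, int k) \<in> chi_star r ` skew_minus \<longleftrightarrow>
      1 \<le> i \<and> i \<le> r \<and> row_cut (r + 1 - i) < k \<and> k \<le> u i"
    using mem_chi_star_skew_minus mem_skew_minus_nonpos[of "r + 1 - i" k] k(1) by auto
  also have "\<dots> \<longleftrightarrow> 1 \<le> i \<and> i \<le> r \<and> r + 1 - i \<le> col_cut k \<and> i \<le> ut k"
    using ut_shift_less_w_shift_iff_row_cut_less[of "r + 1 - i" k] k
      ut_shift_less_w_shift_iff_le_col_cut[of "r + 1 - i" k] le_u_iff_le_ut[of i k]
    by auto
  also have "\<dots> \<longleftrightarrow> i \<in> {r + 1 - col_cut k..ut k}"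
    using col_cut_le_r[of k] transpose_part_le[of r u k] by auto
  finally show "i \<in> {i. (i, int k) \<in> chi_star r ` skew_minus} \<longleftrightarrow> i \<in> {r + 1 - col_cut k..ut k}"
    by simp
qed

lemma row_count_skew_plus:
  assumes i: "1 \<le> i" "i \<le> r"
  shows "int (row_count skew_plus i) = w i + int (card {k \<in> {1..d - r}. w_shift i < ut_shift k})"
  using row_skew_plus[OF i] neg_row_cut_le_w[OF i]
  by (simp add: row_count_def row_cut_def inversion_cols_def)

lemma col_count_chi_star_skew_minus:
  assumes k: "1 \<le> k" "k \<le> d - r"
  shows "int (col_count (chi_star r ` skew_minus) (int k))
       = int (ut k) - int (card {i \<in> {1..r}. w_shift i < ut_shift k})"
  using col_chi_star_skew_minus[OF k] card_w_shift_less_ut_shift[OF k]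
    r_minus_ut_le_col_cut[of k] col_cut_le_r[of k]
  by (simp add: col_count_def)

lemma no_inversion_within_w:
  "1 \<le> i \<Longrightarrow> i < j \<Longrightarrow> j \<le> r \<Longrightarrow> wu j - int j < wu i - int i"
  using w_antimono[of i j] by (simp add: concat_seq_def)

lemma no_inversion_within_ut: "r < i \<Longrightarrow> i < j \<Longrightarrow> wu j - int j < wu i - int i"
  using transpose_part_antimono[of "i - r" "j - r" r u] by (simp add: concat_seq_def) linarith

lemma inversions_eq:
  "{(i, j). 1 \<le> i \<and> i < j \<and> j \<le> d \<and> wu i - int i < wu j - int j}
     = (SIGMA i:{1..r}. (+) r ` inversion_cols i)"
proof (rule set_eqI, clarify)
  fix i j
  show "(i, j) \<in> {(i, j). 1 \<le> i \<and> i < j \<and> j \<le> d \<and> wu i - int i < wu j - int j}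
    \<longleftrightarrow> (i, j) \<in> (SIGMA i:{1..r}. (+) r ` inversion_cols i)"
  proof (cases "1 \<le> i \<and> i \<le> r \<and> r < j")
    case True
    then obtain k where "j = r + k" "1 \<le> k" by (intro that[of "j - r"]) auto
    then show ?thesis using True by (auto simp: inversion_cols_def concat_seq_def)
  next
    case False
    then show ?thesis
      using no_inversion_within_w[of i j] no_inversion_within_ut[of i j]
      by (auto simp: inversion_cols_def not_less)
  qed
qed

lemma inv_count_eq_sum_row_cut: "inv_count d wu = (\<Sum>i = 1..r. row_cut i)"
  unfolding inv_count_def inversions_eq
  by (simp add: card_SigmaI card_image row_cut_def inversion_cols_def)

lemma card_skew_minus: "card skew_minus = (\<Sum>i = 1..r. u (r + 1 - i) - row_cut i)"
proof -
  have "skew_minus = (SIGMA i:{1..r}. {j. (i, j) \<in> skew_minus})"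
    by (auto simp: skew_minus_def mem_skew)
  also have "card \<dots> = (\<Sum>i = 1..r. card {j. (i, j) \<in> skew_minus})"
    by (rule card_SigmaI) (simp_all add: row_skew_minus)
  also have "\<dots> = (\<Sum>i = 1..r. u (r + 1 - i) - row_cut i)"
    by (rule sum.cong) (simp_all add: row_skew_minus)
  finally show ?thesis .
qed

lemma inv_count_eq: "int (inv_count d wu) = int (sum u {1..r}) - int (card skew_minus)"
proof -
  have "sum u {1..r} = (\<Sum>i = 1..r. u (r + 1 - i))"
    using sum.atLeastAtMost_rev[of u 1 r] by simp
  then show ?thesis
    unfolding inv_count_eq_sum_row_cut card_skew_minus
    using row_cut_le_u by (simp add: of_nat_sum of_nat_diff sum_subtractf)
qed

end

theorem lemma5p7:
  fixes d r :: nat and w :: "nat \<Rightarrow> int" and u :: "nat \<Rightarrow> nat"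
  assumes "1 \<le> r" and "r < d"
    and "gen_partition r w"
    and "partition_le r u" and "u 1 \<le> d - r"
    and "diagram r (chi r u) \<subseteq> diagram r w"
    and "admissible d (concat_seq r w (transpose_part r u))"
  defines "ut \<equiv> transpose_part r u"
    and "\<Sigma> \<equiv> skew_diagram r w (chi r u)"
  defines "\<Sigma>p \<equiv> {(i, j) \<in> \<Sigma>. transpose_ext r u (1 - j) - ereal (of_int (int r + 1 - j))
                                    > ereal (of_int (w i - int i))}"
    and "\<Sigma>m \<equiv> {(i, j) \<in> \<Sigma>. transpose_ext r u (1 - j) - ereal (of_int (int r + 1 - j))
                                    < ereal (of_int (w i - int i))}"
    and "sp \<equiv> (\<lambda>i. w i + int (card {j \<in> {1..d - r}. w i - int i < int (ut j) - int (r + j)}))"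
    and "sm \<equiv> (\<lambda>j. int (ut j) - int (card {i \<in> {1..r}. w i - int i < int (ut j) - int (r + j)}))"
  shows "(\<forall>i \<in> {1..r}. sp i = int (row_count \<Sigma>p i))
       \<and> (\<forall>j \<in> {1..d - r}. sm j = int (col_count (chi_star r ` \<Sigma>m) (int j)))
       \<and> int (inv_count d (concat_seq r w ut)) = int (sum u {1..r}) - int (card \<Sigma>m)"
proof -
  interpret skew_setting d r w u using assms(3-7) by unfold_locales
  have "\<Sigma>p = skew_plus" "\<Sigma>m = skew_minus"
    unfolding \<Sigma>p_def \<Sigma>m_def \<Sigma>_def skew_plus_def skew_minus_def skew_def by simp_all
  then show ?thesis
    using row_count_skew_plus col_count_chi_star_skew_minus inv_count_eq
    unfolding sp_def sm_def ut_def by simp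
qed

end
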